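(* Let $P=MN_P$ be a standard parabolic subgroup, $\pi\in\Pi_{\mathrm{disc}}(M)$, $R$ a standard parabolic subgroup and $w\in{}_RW_P$. Let $Q$ be standard with $P_0\subset Q\subset R$ and $w'\in{}_QW^R_{R_w}\,w$ with $P_\pi\subset P_{w'}$. (1) For every $\varpi^\vee\in\hat\Delta_Q^{R,\vee}$, $\langle w'\nu^w_{w'},\varpi^\vee\rangle\le0$, with equality if and only if $\varpi^\vee\in w'\mathfrak a^G_{P_w}$. (2) The following are equivalent: (a) $P_w=P_{w'}$; (b) $(w'\nu^w_{w'})^R_Q=0$; (c) $w'\in W^R(R_w;Q)\,w$. (3) There exists $c_1>0$ such that for every $T\in\mathfrak a_0$ with $\langle\alpha,T\rangle\ge0$ for all $\alpha\in\Delta_0$, every standard $P_0\subset Q\subset R$ and every $w'\in{}_QW^R_{R_w}w\setminus W^R(R_w;Q)w$ with $P_\pi\subset P_{w'}$, one has $\langle(w'\nu^w_{w'})^R_Q,T\rangle\le-c_1d(T)$.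
   Context: $E/F$ is a quadratic extension of number fields, $G=\mathrm{Res}_{E/F}\mathrm{GL}_n$, $P_0$ the upper triangular Borel, $W\cong\mathfrak S_n$, $\mathfrak a_0\cong\mathbb R^n$ with standard inner product; $\Delta_0$ the simple roots, $d(T)=\min_{\alpha\in\Delta_0}\langle\alpha,T\rangle$. For standard $Q\subset R$: $\mathfrak a_Q^R=\mathfrak a_Q\cap\mathfrak a_0^R$, $\Delta_Q^R$ simple roots of $A_Q$ in $M_R\cap N_Q$, $\hat\Delta_Q^{R,\vee}$ the dual basis of $\mathfrak a_Q^R$; $\mu\mapsto\mu^R_Q$ is the orthogonal projection $\mathfrak a_0^*\to\mathfrak a_Q^{R,*}$. For standard $S,Q$: ${}_QW_S$ is the set of $w\in W$ with $M_S\cap w^{-1}P_0w=M_S\cap P_0$, $M_Q\cap wP_0w^{-1}=M_Q\cap P_0$, $S_w=(M_S\cap w^{-1}Qw)N_S$, $Q_w=(M_Q\cap wSw^{-1})N_Q$; superscript $R$ denotes the analogous objects for $M_R$ (Weyl group $W^R$); $W^R(S;Q)$ is the set of $w\in{}_QW^R_S$ with $M_S\subset w^{-1}M_Qw$. Here $R_w=(M_R\cap wPw^{-1})N_R$; for $w'$ as in the claim, $w'\in{}_QW_P$ and $P_{w'}\subset P_w\subset P$ (with $P_{w'}=(M\cap w'^{-1}Qw')N_P$). $\Pi_{\mathrm{disc}}(M)$: discrete automorphic representations with central character trivial on $A_M^\infty$; writing $M=\prod G_{n_i}$, $\pi=\boxtimes\pi_i$, Moeglin–Waldspurger gives $n_i=r_id_i$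 with $\pi_i$ the residual representation attached to $\sigma_i^{\otimes d_i}$, $\sigma_i$ cuspidal on $\mathrm{GL}_{r_i}$ over $E$; $P_\pi\subset P$ is the standard parabolic with $P_\pi\cap M=\prod P_{\pi_i}$, $P_{\pi_i}$ with Levi $\mathrm{GL}_{r_i}^{d_i}$. For $P_\pi\subset S\subset S'\subset P$, with $S\cap M=\prod S_i$, $S'\cap M=\prod S'_i$, $\nu_S^{S'}=(-\rho_{S_i}^{S'_i}/r_i)_i$. Then $\nu^w_{w'}=\nu^{P_w}_{P_{w'}}$. *)

theory Defs
  imports Complex_Main "HOL-Combinatorics.Permutations"
begin

text \<open>Combinatorial model of G = Res_{E/F} GL_n.  Coordinates of a_0 = R^n are
indexed by 0..n-1; vectors are functions nat => real vanishing outside {..<n}.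
The simple root alpha_i = e_i - e_(i+1), i < n - 1.  A standard parabolic is
encoded by the set of simple roots of its Levi (P_0 is the empty set,
G is the full set {..<n-1}).  Weyl group elements are permutations of {..<n};
w acts on roots by e_i |-> e_(w i).\<close>

definition stdpar :: "nat \<Rightarrow> nat set \<Rightarrow> bool" where
  "stdpar n J \<longleftrightarrow> J \<subseteq> {..<n-1}"

definition Gpar :: "nat \<Rightarrow> nat set" where
  "Gpar n = {..<n-1}"

text \<open>a and b lie in the same diagonal block of the Levi of J.\<close>
definition sameblock :: "nat set \<Rightarrow> nat \<Rightarrow> nat \<Rightarrow> bool" where
  "sameblock J a b \<longleftrightarrow> (\<forall>i. min a b \<le> i \<and> i < max a b \<longrightarrow> i \<in> J)"

definition blockof :: "nat \<Rightarrow> nat set \<Rightarrow> nat \<Rightarrow> nat set" where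
  "blockof n J a = {b. b < n \<and> sameblock J a b}"

definition Vec :: "nat \<Rightarrow> (nat \<Rightarrow> real) set" where
  "Vec n = {v. \<forall>k\<ge>n. v k = 0}"

definition ip :: "nat \<Rightarrow> (nat \<Rightarrow> real) \<Rightarrow> (nat \<Rightarrow> real) \<Rightarrow> real" where
  "ip n x y = (\<Sum>k<n. x k * y k)"

text \<open>Pairing of the simple root alpha_i with a vector.\<close>
definition sroot :: "nat \<Rightarrow> (nat \<Rightarrow> real) \<Rightarrow> real" where
  "sroot i v = v i - v (Suc i)"

definition act :: "(nat \<Rightarrow> nat) \<Rightarrow> (nat \<Rightarrow> real) \<Rightarrow> (nat \<Rightarrow> real)" where
  "act w x = (\<lambda>j. x (inv w j))"

definition Weyl :: "nat \<Rightarrow> (nat \<Rightarrow> nat) set" where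
  "Weyl n = {w. w permutes {..<n}}"

text \<open>W^R: Weyl group of M_R (permutations preserving every R-block).\<close>
definition WeylR :: "nat \<Rightarrow> nat set \<Rightarrow> (nat \<Rightarrow> nat) set" where
  "WeylR n R = {w \<in> Weyl n. \<forall>a<n. sameblock R a (w a)}"

text \<open>_Q W_S : M_S \<inter> w^-1 P_0 w = M_S \<inter> P_0 and M_Q \<inter> w P_0 w^-1 = M_Q \<inter> P_0,
written as equalities of the sets of roots e_a - e_b (a \<noteq> b) involved.\<close>
definition WQS :: "nat \<Rightarrow> nat set \<Rightarrow> nat set \<Rightarrow> (nat \<Rightarrow> nat) set" where
  "WQS n Q S = {w \<in> Weyl n.
     (\<forall>a<n. \<forall>b<n. a \<noteq> b \<longrightarrow> sameblock S a b \<longrightarrow> (w a < w b \<longleftrightarrow> a < b)) \<and>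
     (\<forall>a<n. \<forall>b<n. a \<noteq> b \<longrightarrow> sameblock Q a b \<longrightarrow> (inv w a < inv w b \<longleftrightarrow> a < b))}"

definition WQSR :: "nat \<Rightarrow> nat set \<Rightarrow> nat set \<Rightarrow> nat set \<Rightarrow> (nat \<Rightarrow> nat) set" where
  "WQSR n R Q S = WQS n Q S \<inter> WeylR n R"

text \<open>W^R(S;Q) = { u \<in> _Q W^R_S . M_S \<subseteq> u^-1 M_Q u }.\<close>
definition WRSQ :: "nat \<Rightarrow> nat set \<Rightarrow> nat set \<Rightarrow> nat set \<Rightarrow> (nat \<Rightarrow> nat) set" where
  "WRSQ n R S Q = {u \<in> WQSR n R Q S.
     \<forall>a<n. \<forall>b<n. sameblock S a b \<longrightarrow> sameblock Q (u a) (u b)}"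

text \<open>For w \<in> _Q W_S, S_w = (M_S \<inter> w^-1 Q w) N_S: the standard parabolic whose Levi is
M_S \<inter> w^-1 M_Q w; its Levi simple roots are the alpha_i of M_S with w alpha_i a root of M_Q.
Thus S_w = parw n S Q w, Q_w = parw n Q S (inv w).\<close>
definition parw :: "nat \<Rightarrow> nat set \<Rightarrow> nat set \<Rightarrow> (nat \<Rightarrow> nat) \<Rightarrow> nat set" where
  "parw n S Q w = {i \<in> S. Suc i < n \<and> sameblock Q (w i) (w (Suc i))}"

text \<open>a_Q^R = a_Q \<inter> a_0^R: constant on Q-blocks, sum zero on each R-block.\<close>
definition aQR :: "nat \<Rightarrow> nat set \<Rightarrow> nat set \<Rightarrow> (nat \<Rightarrow> real) set" where
  "aQR n Q R = {v \<in> Vec n. (\<forall>a<n. \<forall>b<n. sameblock Q a b \<longrightarrow> v a = v b) \<and>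
                    (\<forall>a<n. (\<Sum>b\<in>blockof n R a. v b) = 0)}"

text \<open>Orthogonal projection mu |-> mu^R_Q onto a_Q^{R,*} (identified with a_Q^R).\<close>
definition proj :: "nat \<Rightarrow> nat set \<Rightarrow> nat set \<Rightarrow> (nat \<Rightarrow> real) \<Rightarrow> (nat \<Rightarrow> real)" where
  "proj n Q R mu = (THE p. p \<in> aQR n Q R \<and> (\<forall>v\<in>aQR n Q R. ip n (\<lambda>k. mu k - p k) v = 0))"

text \<open>hat Delta_Q^{R,vee}: the basis of a_Q^R dual to Delta_Q^R = {alpha_i : i \<in> R - Q}.\<close>
definition coweights :: "nat \<Rightarrow> nat set \<Rightarrow> nat set \<Rightarrow> (nat \<Rightarrow> real) set" where
  "coweights n Q R = {v \<in> aQR n Q R. \<exists>i\<in>R - Q. \<forall>j\<in>R - Q.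
                         sroot j v = (if j = i then 1 else 0)}"

definition dT :: "nat \<Rightarrow> (nat \<Rightarrow> real) \<Rightarrow> real" where
  "dT n T = Min ((\<lambda>i. sroot i T) ` {..<n-1})"

definition rho :: "nat \<Rightarrow> nat set \<Rightarrow> nat set \<Rightarrow> (nat \<Rightarrow> real)" where
  "rho n S S' = (\<lambda>k. (1/2) * (\<Sum>(a,b)\<in>{(a,b). a < b \<and> b < n \<and> sameblock S' a b \<and> \<not> sameblock S a b}.
       ((if k = a then 1 else 0) - (if k = b then 1 else 0))))"

text \<open>Data of pi \<in> Pi_disc(M) relevant here (Moeglin-Waldspurger): r k is the integer r_i
of the block M_i = GL_{n_i} of M containing coordinate k, and P_pi \<subseteq> P is the standard
parabolic with P_pi \<inter> M_i having Levi GL_{r_i}^{d_i}, i.e. every block of P_pi inside M_i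
has size r_i.\<close>
definition pi_data :: "nat \<Rightarrow> nat set \<Rightarrow> (nat \<Rightarrow> nat) \<Rightarrow> nat set \<Rightarrow> bool" where
  "pi_data n P r Ppi \<longleftrightarrow> Ppi \<subseteq> P \<and> (\<forall>k<n. 0 < r k) \<and>
     (\<forall>a<n. \<forall>b<n. sameblock P a b \<longrightarrow> r a = r b) \<and>
     (\<forall>a<n. card (blockof n Ppi a) = r a)"

definition nu :: "nat \<Rightarrow> (nat \<Rightarrow> nat) \<Rightarrow> nat set \<Rightarrow> nat set \<Rightarrow> (nat \<Rightarrow> real)" where
  "nu n r S S' = (\<lambda>k. - rho n S S' k / real (r k))"

end

theory Submission
  imports Defs
begin

text \<open>Write \<open>w' = u w\<close>. Blockwise \<open>\<nu> = -\<rho>/r\<close>, so pairing \<open>w'\<nu>\<close> with a vector \<open>z\<close> gives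
\<open>-1/2 \<Sum> (z(w'a) - z(w'b))/r\<^sub>a\<close>, summed over the positive roots \<open>e\<^sub>a - e\<^sub>b\<close> of \<open>M\<^bsub>P\<^sub>w\<^esub>\<close>
that are not roots of \<open>M\<^bsub>P\<^sub>w\<^sub>'\<^esub>\<close>. Because \<open>w\<close> and \<open>u\<close> are minimal in their cosets, such a
root is sent by \<open>w'\<close> to a positive root inside one block of \<open>R\<close> joining two different
blocks of \<open>Q\<close>. Coweights of \<open>a\<^sub>Q\<^sup>R\<close> are non-increasing along blocks of \<open>R\<close>, which gives
(1). The projection to \<open>a\<^sub>Q\<^sup>R\<close> of a dominant \<open>T\<close> is a difference of block averages, so it
drops by at least \<open>d(T)\<close> between distinct \<open>Q\<close>-blocks of one \<open>R\<close>-block; as \<open>r\<^sub>a \<le> n\<close> this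
gives (3) with \<open>c\<^sub>1 = 1/(2n)\<close>. There are no such roots iff \<open>P\<^sub>w = P\<^sub>w\<^sub>'\<close>, iff \<open>u\<close> maps
blocks of \<open>R\<^sub>w\<close> into blocks of \<open>Q\<close>, i.e. \<open>u \<in> W\<^sup>R(R\<^sub>w;Q)\<close>; applying the estimate behind
(3) to the strictly dominant \<open>T = (0, -1, -2, \<dots>)\<close> shows that the projection in (2)
vanishes only in that case.\<close>


section \<open>Blocks\<close>

lemma sameblock_sym: "sameblock J a b = sameblock J b a"
  unfolding sameblock_def by (simp add: min.commute max.commute)

lemma sameblock_refl [simp]: "sameblock J a a"
  unfolding sameblock_def by auto

lemma sameblock_mono: "J \<subseteq> K \<Longrightarrow> sameblock J a b \<Longrightarrow> sameblock K a b"
  unfolding sameblock_def by auto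

lemma sameblock_trans: "sameblock J a b \<Longrightarrow> sameblock J b c \<Longrightarrow> sameblock J a c"
  unfolding sameblock_def
  by (metis le_cases max.absorb1 max.absorb2 min.absorb1 min.absorb2 order.trans linorder_not_le)

lemma sameblock_iff_le: "a \<le> b \<Longrightarrow> sameblock J a b \<longleftrightarrow> (\<forall>i. a \<le> i \<and> i < b \<longrightarrow> i \<in> J)"
  unfolding sameblock_def by auto

lemma sameblock_Suc_iff: "sameblock J i (Suc i) \<longleftrightarrow> i \<in> J"
  unfolding sameblock_def by (force simp: less_Suc_eq_le)

lemma sameblock_subinterval:
  "sameblock J a b \<Longrightarrow> a \<le> x \<Longrightarrow> x \<le> y \<Longrightarrow> y \<le> b \<Longrightarrow> sameblock J x y"
  unfolding sameblock_def by auto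

lemma sameblock_chain:
  assumes "\<And>i. a \<le> i \<Longrightarrow> i < b \<Longrightarrow> sameblock J (f i) (f (Suc i))" and "a \<le> b"
  shows "sameblock J (f a) (f b)"
  using assms(2) by (induction b rule: dec_induct) (simp, metis assms(1) sameblock_trans)

lemma sameblock_separated:
  assumes "sameblock J a x" "sameblock J b y" "a < b" "\<not> sameblock J a b"
  shows "x < y"
proof (rule ccontr)
  assume "\<not> x < y"
  have "j \<in> J" if "a \<le> j" "j < b" for j
  proof (cases "j < x")
    case True
    then show ?thesis using assms(1) that unfolding sameblock_def by auto
  next
    case False
    then show ?thesis using assms(2) that \<open>\<not> x < y\<close> unfolding sameblock_def by auto
  qed
  then show False using assms(3,4) sameblock_iff_le by auto
qed

lemma parw_iff: "i \<in> parw n S Q f \<longleftrightarrow> i \<in> S \<and> Suc i < n \<and> sameblock Q (f i) (f (Suc i))"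
  unfolding parw_def by auto

lemma sameblock_parwD:
  assumes "sameblock (parw n S Q f) a b"
  shows "sameblock S a b \<and> sameblock Q (f a) (f b)"
proof -
  have *: "sameblock S x y \<and> sameblock Q (f x) (f y)"
    if "sameblock (parw n S Q f) x y" "x \<le> y" for x y
    using that sameblock_chain[of x y Q f] by (auto simp: sameblock_iff_le parw_iff)
  show ?thesis
    using *[of a b] *[of b a] assms by (metis nat_le_linear sameblock_sym)
qed

section \<open>Projection onto \<open>a\<^sub>Q\<^sup>R\<close> by block averages\<close>

definition block_avg :: "nat \<Rightarrow> nat set \<Rightarrow> (nat \<Rightarrow> real) \<Rightarrow> nat \<Rightarrow> real" where
  "block_avg n J x k =
     (if k < n then (\<Sum>b\<in>blockof n J k. x b) / real (card (blockof n J k)) else 0)"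

lemma finite_blockof [simp]: "finite (blockof n J a)"
  unfolding blockof_def by auto

lemma self_in_blockof: "a < n \<Longrightarrow> a \<in> blockof n J a"
  unfolding blockof_def by auto

lemma card_blockof_pos: "a < n \<Longrightarrow> 0 < card (blockof n J a)"
  using self_in_blockof card_gt_0_iff by fastforce

lemma blockof_eq_filter: "blockof n J a = {b \<in> {..<n}. sameblock J a b}"
  unfolding blockof_def by auto

lemma blockof_eq: "sameblock J a b \<Longrightarrow> blockof n J a = blockof n J b"
  unfolding blockof_def using sameblock_trans sameblock_sym by blast

lemma ip_sym: "ip n x y = ip n y x"
  unfolding ip_def by (simp add: mult.commute)

lemma ip_diff_left: "ip n (\<lambda>k. f k - g k) y = ip n f y - ip n g y"
  unfolding ip_def by (simp add: left_diff_distrib sum_subtractf)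

lemma ip_diff_right: "ip n y (\<lambda>k. f k - g k) = ip n y f - ip n y g"
  unfolding ip_def by (simp add: right_diff_distrib sum_subtractf)

lemma ip_cong: "(\<And>k. k < n \<Longrightarrow> y k = y' k) \<Longrightarrow> ip n x y = ip n x y'"
  unfolding ip_def by simp

lemma ip_indicator:
  assumes "B \<subseteq> {..<n}"
  shows "ip n f (\<lambda>k. if k \<in> B then 1 else 0) = sum f B"
proof -
  have "ip n f (\<lambda>k. if k \<in> B then 1 else 0) = sum f ({..<n} \<inter> B)"
    unfolding ip_def by (simp add: sum.inter_restrict if_distrib cong: if_cong)
  then show ?thesis using assms by (simp add: Int_absorb1)
qed

lemma ip_block_avg_sym: "ip n (block_avg n J x) y = ip n x (block_avg n J y)"
proof -
  let ?c = "\<lambda>k. real (card (blockof n J k))"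
  have expand: "ip n (block_avg n J x) y =
      (\<Sum>k<n. \<Sum>b<n. if sameblock J k b then x b * y k / ?c k else 0)" for x y
    unfolding ip_def
  proof (intro sum.cong refl)
    fix k assume "k \<in> {..<n}"
    then have "block_avg n J x k * y k = (\<Sum>b\<in>blockof n J k. x b * y k / ?c k)"
      by (simp add: block_avg_def sum_divide_distrib sum_distrib_right)
    also have "\<dots> = (\<Sum>b<n. if sameblock J k b then x b * y k / ?c k else 0)"
      unfolding blockof_eq_filter by (rule sum.inter_filter) simp
    finally show "block_avg n J x k * y k = \<dots>" .
  qed
  have "ip n (block_avg n J x) y = (\<Sum>b<n. \<Sum>k<n. if sameblock J k b then x b * y k / ?c k else 0)"
    unfolding expand by (rule sum.swap)
  also have "\<dots> = (\<Sum>b<n. \<Sum>k<n. if sameblock J b k then y k * x b / ?c b else 0)"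
    by (intro sum.cong refl) (metis blockof_eq sameblock_sym mult.commute)
  also have "\<dots> = ip n x (block_avg n J y)"
    by (subst ip_sym) (rule expand[symmetric])
  finally show ?thesis .
qed

lemma block_avg_const:
  assumes "\<forall>a<n. \<forall>b<n. sameblock J a b \<longrightarrow> v a = v b" "k < n"
  shows "block_avg n J v k = v k"
proof -
  have "v b = v k" if "b \<in> blockof n J k" for b
    using assms that unfolding blockof_def by (metis mem_Collect_eq sameblock_sym)
  then have "(\<Sum>b\<in>blockof n J k. v b) = (\<Sum>b\<in>blockof n J k. v k)"
    by (rule sum.cong[OF refl])
  then show ?thesis
    using assms(2) card_blockof_pos[OF assms(2), of J] unfolding block_avg_def by auto
qed

lemma block_avg_eq_0:
  "\<forall>a<n. (\<Sum>b\<in>blockof n J a. v b) = 0 \<Longrightarrow> block_avg n J v = (\<lambda>k. 0)"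
  unfolding block_avg_def by auto

lemma sum_blockof_block_avg:
  assumes "J \<subseteq> K" "a < n"
  shows "(\<Sum>b\<in>blockof n K a. block_avg n J x b) = (\<Sum>b\<in>blockof n K a. x b)"
proof -
  let ?B = "blockof n K a"
  let ?i = "\<lambda>k. if k \<in> ?B then 1 else (0::real)"
  have sub: "?B \<subseteq> {..<n}" by (auto simp: blockof_def)
  have "?i c = ?i d" if "c < n" "d < n" "sameblock J c d" for c d
  proof -
    have "sameblock K c d" using sameblock_mono[OF assms(1) that(3)] .
    then have "sameblock K a c \<longleftrightarrow> sameblock K a d" by (meson sameblock_sym sameblock_trans)
    then show ?thesis using that by (simp add: blockof_def)
  qed
  then have "ip n x (block_avg n J ?i) = ip n x ?i"
    by (intro ip_cong block_avg_const allI impI)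
  then show ?thesis
    using ip_block_avg_sym[of n J x ?i] ip_indicator[OF sub] by simp
qed

lemma block_avg_diff_in_aQR:
  assumes "Q \<subseteq> R"
  shows "(\<lambda>k. block_avg n Q x k - block_avg n R x k) \<in> aQR n Q R"
  unfolding aQR_def
proof (intro CollectI conjI allI impI)
  show "(\<lambda>k. block_avg n Q x k - block_avg n R x k) \<in> Vec n"
    unfolding Vec_def block_avg_def by simp
next
  fix a b assume "a < n" "b < n" "sameblock Q a b"
  then show "block_avg n Q x a - block_avg n R x a = block_avg n Q x b - block_avg n R x b"
    using blockof_eq[of Q a b n] blockof_eq[of R a b n] sameblock_mono[OF assms]
    unfolding block_avg_def by simp
next
  fix a assume "a < n"
  then show "(\<Sum>b\<in>blockof n R a. block_avg n Q x b - block_avg n R x b) = 0"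
    using sum_blockof_block_avg[OF assms] sum_blockof_block_avg[of R R]
    by (simp add: sum_subtractf)
qed

lemma x_minus_block_avg_diff_orthogonal:
  assumes "v \<in> aQR n Q R"
  shows "ip n (\<lambda>k. x k - (block_avg n Q x k - block_avg n R x k)) v = 0"
proof -
  have v_Q: "\<forall>a<n. \<forall>b<n. sameblock Q a b \<longrightarrow> v a = v b"
    and v_R: "\<forall>a<n. (\<Sum>b\<in>blockof n R a. v b) = 0"
    using assms unfolding aQR_def by blast+
  have "ip n (block_avg n Q x) v = ip n x v"
    unfolding ip_block_avg_sym by (intro ip_cong block_avg_const[OF v_Q])
  moreover have "ip n (block_avg n R x) v = 0"
    unfolding ip_block_avg_sym block_avg_eq_0[OF v_R] by (simp add: ip_def)
  ultimately show ?thesis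
    by (simp only: ip_diff_left)
qed

lemma diff_in_aQR:
  assumes "p \<in> aQR n Q R" "q \<in> aQR n Q R"
  shows "(\<lambda>k. p k - q k) \<in> aQR n Q R"
  unfolding aQR_def
proof (intro CollectI conjI allI impI)
  show "(\<lambda>k. p k - q k) \<in> Vec n" using assms unfolding aQR_def Vec_def by simp
next
  fix a b assume "a < n" "b < n" "sameblock Q a b"
  then have "p a = p b" "q a = q b" using assms unfolding aQR_def by blast+
  then show "p a - q a = p b - q b" by simp
next
  fix a assume "a < n"
  then show "(\<Sum>b\<in>blockof n R a. p b - q b) = 0"
    using assms unfolding aQR_def by (simp add: sum_subtractf)
qed

lemma aQR_eq_if_orthogonal:
  assumes "p \<in> aQR n Q R" "q \<in> aQR n Q R"
    and "\<forall>v\<in>aQR n Q R. ip n (\<lambda>k. x k - p k) v = 0"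
    and "\<forall>v\<in>aQR n Q R. ip n (\<lambda>k. x k - q k) v = 0"
  shows "p = q"
proof -
  let ?d = "\<lambda>k. p k - q k"
  have "ip n (\<lambda>k. x k - q k) ?d - ip n (\<lambda>k. x k - p k) ?d = 0"
    using assms(3,4) diff_in_aQR[OF assms(1,2)] by simp
  then have "(\<Sum>k<n. ?d k * ?d k) = 0"
    unfolding ip_def by (simp add: sum_subtractf[symmetric] algebra_simps)
  then have "\<forall>k<n. p k = q k"
    by (subst (asm) sum_nonneg_eq_0_iff) auto
  moreover have "\<forall>k\<ge>n. p k = q k"
    using assms(1,2) unfolding aQR_def Vec_def by simp
  ultimately show ?thesis by (metis ext not_le)
qed

lemma proj_eq_block_avg_diff:
  assumes "Q \<subseteq> R"
  shows "proj n Q R x = (\<lambda>k. block_avg n Q x k - block_avg n R x k)"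
  unfolding proj_def
proof (rule the_equality)
  let ?p = "\<lambda>k. block_avg n Q x k - block_avg n R x k"
  show "?p \<in> aQR n Q R \<and> (\<forall>v\<in>aQR n Q R. ip n (\<lambda>k. x k - ?p k) v = 0)"
    using block_avg_diff_in_aQR[OF assms] x_minus_block_avg_diff_orthogonal by blast
  then show "p = ?p" if "p \<in> aQR n Q R \<and> (\<forall>v\<in>aQR n Q R. ip n (\<lambda>k. x k - p k) v = 0)" for p
    using that aQR_eq_if_orthogonal[of p n Q R ?p x] by blast
qed

lemma ip_proj_sym: "Q \<subseteq> R \<Longrightarrow> ip n (proj n Q R x) y = ip n x (proj n Q R y)"
  by (simp add: proj_eq_block_avg_diff ip_diff_left ip_diff_right ip_block_avg_sym)

lemma proj_zero: "Q \<subseteq> R \<Longrightarrow> proj n Q R (\<lambda>k. 0) = (\<lambda>k. 0)"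
  by (simp add: proj_eq_block_avg_diff block_avg_def fun_eq_iff)

section \<open>Pairings with \<open>\<rho>\<close> and with coweights\<close>

lemma ip_act:
  assumes "p permutes {..<n}"
  shows "ip n (act p x) z = (\<Sum>k<n. x k * z (p k))"
proof -
  have "(\<Sum>k<n. x (inv p (p k)) * z (p k)) = (\<Sum>j<n. x (inv p j) * z j)"
    using sum.reindex_bij_betw[OF permutes_imp_bij[OF assms], of "\<lambda>j. x (inv p j) * z j"] by simp
  then show ?thesis
    unfolding ip_def act_def using permutes_inverses(2)[OF assms] by simp
qed

lemma sum_indicator_diff_mult:
  fixes h :: "nat \<Rightarrow> real"
  assumes "a < n" "b < n"
  shows "(\<Sum>k<n. ((if k = a then 1 else 0) - (if k = b then 1 else 0)) * h k) = h a - h b"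
proof -
  have "(\<Sum>k<n. ((if k = a then 1 else 0) - (if k = b then 1 else 0)) * h k)
      = (\<Sum>k<n. (if k = a then h k else 0) - (if k = b then h k else 0))"
    by (intro sum.cong) auto
  then show ?thesis using assms by (simp add: sum_subtractf sum.delta')
qed

lemma sum_rho_mult:
  fixes h :: "nat \<Rightarrow> real"
  shows "(\<Sum>k<n. rho n S S' k * h k) =
     (1/2) * (\<Sum>(a,b)\<in>{(a,b). a < b \<and> b < n \<and> sameblock S' a b \<and> \<not> sameblock S a b}. h a - h b)"
proof -
  let ?Pr = "{(a,b). a < b \<and> b < n \<and> sameblock S' a b \<and> \<not> sameblock S a b}"
  let ?e = "\<lambda>k p. (if k = fst p then 1 else 0) - (if k = snd p then 1 else (0::real))"
  have "(\<Sum>k<n. rho n S S' k * h k) = (1/2) * (\<Sum>k<n. \<Sum>p\<in>?Pr. ?e k p * h k)"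
    unfolding rho_def by (simp add: sum_distrib_left sum_distrib_right case_prod_beta mult.assoc)
  also have "\<dots> = (1/2) * (\<Sum>p\<in>?Pr. \<Sum>k<n. ?e k p * h k)"
    by (rule arg_cong[where f = "(*) (1/2)"], rule sum.swap)
  also have "\<dots> = (1/2) * (\<Sum>p\<in>?Pr. h (fst p) - h (snd p))"
    using sum_indicator_diff_mult by (intro arg_cong[where f = "(*) (1/2)"] sum.cong refl) auto
  finally show ?thesis by (simp add: case_prod_beta)
qed

lemma avg_diff_lower_bound:
  fixes T :: "nat \<Rightarrow> real"
  assumes "finite A" "finite B" "A \<noteq> {}" "B \<noteq> {}" "\<forall>x\<in>A. \<forall>y\<in>B. d \<le> T x - T y"
  shows "d \<le> (\<Sum>x\<in>A. T x) / real (card A) - (\<Sum>y\<in>B. T y) / real (card B)"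
proof -
  have "real (card A) * real (card B) * d = (\<Sum>x\<in>A. \<Sum>y\<in>B. d)"
    by simp
  also have "\<dots> \<le> (\<Sum>x\<in>A. \<Sum>y\<in>B. T x - T y)"
    using assms(5) by (intro sum_mono) auto
  also have "\<dots> = real (card B) * (\<Sum>x\<in>A. T x) - real (card A) * (\<Sum>y\<in>B. T y)"
    by (simp add: sum_subtractf sum_distrib_left)
  finally show ?thesis
    using assms(1-4) by (simp add: field_simps card_gt_0_iff)
qed

lemma antimono_if_sroot_nonneg:
  fixes v :: "nat \<Rightarrow> real"
  assumes "\<And>j. x \<le> j \<Longrightarrow> j < y \<Longrightarrow> 0 \<le> sroot j v" "x \<le> y"
  shows "v y \<le> v x"
  using assms(2)
proof (induction y rule: dec_induct)
  case (step m)
  then show ?case using assms(1)[of m] unfolding sroot_def by linarith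
qed simp

lemma coweight_antimono_on_block:
  assumes v: "v \<in> coweights n Q R" and "x \<le> y" "y < n" "sameblock R x y"
  shows "v y \<le> v x"
proof (rule antimono_if_sroot_nonneg[OF _ assms(2)])
  fix j assume j: "x \<le> j" "j < y"
  obtain i where i: "\<forall>j\<in>R - Q. sroot j v = (if j = i then 1 else 0)"
    using v unfolding coweights_def by blast
  have "\<forall>a<n. \<forall>b<n. sameblock Q a b \<longrightarrow> v a = v b"
    using v unfolding coweights_def aQR_def by blast
  then have "j \<in> Q \<Longrightarrow> sroot j v = 0"
    using j assms(3) sameblock_Suc_iff[of Q j] unfolding sroot_def by simp
  moreover have "j \<in> R" using assms(4) j unfolding sameblock_def by auto
  ultimately show "0 \<le> sroot j v" using i by (cases "j \<in> Q") auto
qed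

lemma sum_aQR_eq_0:
  assumes "v \<in> aQR n Q R"
  shows "(\<Sum>k<n. v k) = 0"
proof -
  have "(\<Sum>k<n. v k) = ip n (block_avg n R v) (\<lambda>_. 1)"
    unfolding ip_block_avg_sym by (simp add: block_avg_const ip_def)
  also have "\<dots> = 0"
    using assms unfolding aQR_def by (simp add: block_avg_eq_0 ip_def)
  finally show ?thesis .
qed

lemma in_act_image_aQR_Gpar_iff:
  assumes p: "p permutes {..<n}" and v: "v \<in> Vec n" "(\<Sum>k<n. v k) = 0"
  shows "v \<in> act p ` aQR n J (Gpar n) \<longleftrightarrow>
    (\<forall>a<n. \<forall>b<n. sameblock J a b \<longrightarrow> v (p a) = v (p b))"
proof -
  have "inj (act p)"
  proof (rule injI)
    fix x y assume "act p x = act p y"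
    then have "x (inv p (p k)) = y (inv p (p k))" for k
      unfolding act_def by metis
    then show "x = y" using permutes_inverses(2)[OF p] by auto
  qed
  moreover have "v = act p (v \<circ> p)"
    unfolding act_def using permutes_inverses(1)[OF p] by auto
  ultimately have "v \<in> act p ` aQR n J (Gpar n) \<longleftrightarrow> v \<circ> p \<in> aQR n J (Gpar n)"
    by (metis inj_image_mem_iff)
  moreover have "v \<circ> p \<in> Vec n"
    using v(1) permutes_not_in[OF p] unfolding Vec_def by simp
  moreover have "\<forall>a<n. (\<Sum>b\<in>blockof n (Gpar n) a. (v \<circ> p) b) = 0"
  proof (intro allI impI)
    fix a assume "a < n"
    then have "blockof n (Gpar n) a = {..<n}"
      unfolding blockof_def Gpar_def sameblock_def by auto
    then show "(\<Sum>b\<in>blockof n (Gpar n) a. (v \<circ> p) b) = 0"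
      using sum.reindex_bij_betw[OF permutes_imp_bij[OF p], of v] v(2) by simp
  qed
  ultimately show ?thesis
    unfolding aQR_def mem_Collect_eq comp_apply by blast
qed

section \<open>The relative position of \<open>P\<^sub>w\<close> and \<open>P\<^sub>w\<^sub>'\<close>\<close>

locale relative_position =
  fixes n :: nat and P R Q :: "nat set" and w u :: "nat \<Rightarrow> nat"
  assumes w_in: "w \<in> WQS n R P"
    and Q_subset: "Q \<subseteq> R"
    and u_in: "u \<in> WQSR n R Q (parw n R P (inv w))"
begin

abbreviation "Rw \<equiv> parw n R P (inv w)"
abbreviation "Pw \<equiv> parw n P R w"
abbreviation "w' \<equiv> u \<circ> w"
abbreviation "Pw' \<equiv> parw n P Q w'"

lemma w_permutes: "w permutes {..<n}"
  using w_in unfolding WQS_def Weyl_def by auto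

lemma u_permutes: "u permutes {..<n}"
  using u_in unfolding WQSR_def WQS_def Weyl_def by auto

lemma w'_permutes: "w' permutes {..<n}"
  using permutes_compose[OF w_permutes u_permutes] .

lemma w_less: "a < n \<Longrightarrow> w a < n"
  using permutes_in_image[OF w_permutes] by simp

lemma inv_w_less: "a < n \<Longrightarrow> inv w a < n"
  using permutes_in_image[OF permutes_inv[OF w_permutes]] by simp

lemma w'_less: "a < n \<Longrightarrow> w' a < n"
  using permutes_in_image[OF w'_permutes] by simp

lemma w_inv_w [simp]: "w (inv w x) = x"
  using permutes_inverses(1)[OF w_permutes] .

lemma inv_w_w [simp]: "inv w (w x) = x"
  using permutes_inverses(2)[OF w_permutes] .

lemma w_less_mono: "a < n \<Longrightarrow> b < n \<Longrightarrow> sameblock P a b \<Longrightarrow> a < b \<Longrightarrow> w a < w b"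
  using w_in unfolding WQS_def by auto

lemma w_le_mono: "a < n \<Longrightarrow> b < n \<Longrightarrow> sameblock P a b \<Longrightarrow> a \<le> b \<Longrightarrow> w a \<le> w b"
  using w_less_mono by (cases "a = b") (auto simp: le_less)

lemma inv_w_less_mono:
  "a < n \<Longrightarrow> b < n \<Longrightarrow> sameblock R a b \<Longrightarrow> a < b \<Longrightarrow> inv w a < inv w b"
  using w_in unfolding WQS_def by auto

lemma inv_w_le_mono:
  "a < n \<Longrightarrow> b < n \<Longrightarrow> sameblock R a b \<Longrightarrow> a \<le> b \<Longrightarrow> inv w a \<le> inv w b"
  using inv_w_less_mono by (cases "a = b") (auto simp: le_less)

lemma u_less_mono: "a < n \<Longrightarrow> b < n \<Longrightarrow> sameblock Rw a b \<Longrightarrow> a < b \<Longrightarrow> u a < u b"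
  using u_in unfolding WQSR_def WQS_def by auto

lemma sameblock_R_u: "a < n \<Longrightarrow> sameblock R a (u a)"
  using u_in unfolding WQSR_def WeylR_def by auto

lemma sameblock_Pw_imp_Rw:
  assumes "sameblock Pw a b" "a < b" "b < n"
  shows "w a < w b \<and> sameblock Rw (w a) (w b)"
proof
  have sP: "sameblock P a b" and sR: "sameblock R (w a) (w b)"
    using sameblock_parwD[OF assms(1)] by auto
  show lt: "w a < w b" using w_less_mono[OF _ assms(3) sP assms(2)] assms by simp
  have "j \<in> Rw" if j: "w a \<le> j" "j < w b" for j
  proof -
    have jR: "j \<in> R" and Suc_j: "Suc j < n"
      using sR j w_less[OF assms(3)] unfolding sameblock_def by auto
    have "a \<le> inv w j"
      using inv_w_le_mono[of "w a" j] sameblock_subinterval[OF sR] j Suc_j w_less assms by simp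
    moreover have "inv w (Suc j) \<le> b"
      using inv_w_le_mono[of "Suc j" "w b"] sameblock_subinterval[OF sR] j Suc_j w_less assms
      by simp
    moreover have "inv w j < inv w (Suc j)"
      using inv_w_less_mono[of j "Suc j"] Suc_j jR sameblock_Suc_iff by simp
    ultimately have "sameblock P (inv w j) (inv w (Suc j))"
      using sameblock_subinterval[OF sP] by simp
    then show ?thesis using jR Suc_j by (simp add: parw_iff)
  qed
  then show "sameblock Rw (w a) (w b)" using sameblock_iff_le lt by auto
qed

lemma w'_less_sameblock_R:
  assumes "sameblock Pw a b" "a < b" "b < n"
  shows "w' a < w' b \<and> sameblock R (w' a) (w' b)"
proof -
  have Rw: "sameblock Rw (w a) (w b)" "w a < w b" and wab: "w a < n" "w b < n"
    using sameblock_Pw_imp_Rw[OF assms] w_less assms by auto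
  have "sameblock R (u (w a)) (u (w b))"
    using sameblock_parwD[OF assms(1)] sameblock_R_u[OF wab(1)] sameblock_R_u[OF wab(2)]
    by (metis sameblock_sym sameblock_trans)
  then show ?thesis using u_less_mono[OF wab Rw] by simp
qed

lemma Pw'_subset_Pw: "Pw' \<subseteq> Pw"
proof
  fix i assume "i \<in> Pw'"
  then have i: "i \<in> P" "Suc i < n" "sameblock R (u (w i)) (u (w (Suc i)))"
    using sameblock_mono[OF Q_subset] by (auto simp: parw_iff)
  then have "sameblock R (w i) (w (Suc i))"
    using sameblock_R_u w_less by (metis Suc_lessD sameblock_sym sameblock_trans)
  then show "i \<in> Pw" using i by (simp add: parw_iff)
qed

lemma not_sameblock_Q_w':
  assumes "a < b" "b < n" "sameblock Pw a b" "\<not> sameblock Pw' a b"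
  shows "\<not> sameblock Q (w' a) (w' b)"
proof
  assume sQ: "sameblock Q (w' a) (w' b)"
  have mono: "w' x < w' y" if "a \<le> x" "x < y" "y \<le> b" for x y
    using w'_less_sameblock_R[of x y] sameblock_subinterval[OF assms(3)] that assms(2) by simp
  have "i \<in> Pw'" if i: "a \<le> i" "i < b" for i
  proof -
    have "w' a \<le> w' i" using mono[of a i] i by (cases "a = i") auto
    moreover have "w' (Suc i) \<le> w' b" using mono[of "Suc i" b] i by (cases "Suc i = b") auto
    moreover have "w' i < w' (Suc i)" using mono[of i "Suc i"] i by simp
    ultimately have "sameblock Q (w' i) (w' (Suc i))"
      using sameblock_subinterval[OF sQ] by (meson less_imp_le)
    moreover have "i \<in> P"
      using sameblock_parwD[OF assms(3)] i unfolding sameblock_def by auto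
    ultimately show ?thesis using i assms(2) by (simp add: parw_iff)
  qed
  then show False using assms(1,4) sameblock_iff_le by auto
qed

lemma Rw_step_sameblock_Q:
  assumes "j \<in> Rw" "Pw = Pw'"
  shows "sameblock Q (u j) (u (Suc j))"
proof -
  let ?x = "inv w j" and ?y = "inv w (Suc j)"
  have j: "j \<in> R" "Suc j < n" "sameblock P ?x ?y"
    using assms(1) by (auto simp: parw_iff)
  have xy: "?x < n" "?y < n" "?x < ?y"
    using inv_w_less inv_w_less_mono[of j "Suc j"] j sameblock_Suc_iff by auto
  have "i \<in> Pw" if i: "?x \<le> i" "i < ?y" for i
  proof -
    have iP: "i \<in> P" using j(3) i unfolding sameblock_def by auto
    have Suc_i: "Suc i < n" using i xy by simp
    have "j \<le> w i"
      using w_le_mono[of ?x i] sameblock_subinterval[OF j(3), of ?x i] i xy by simp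
    moreover have "w (Suc i) \<le> Suc j"
      using w_le_mono[of "Suc i" ?y] sameblock_subinterval[OF j(3), of "Suc i" ?y] i xy by simp
    moreover have "w i < w (Suc i)"
      using w_less_mono[of i "Suc i"] iP Suc_i sameblock_Suc_iff[of P i] by simp
    ultimately have "w i = j" "w (Suc i) = Suc j" by auto
    then show ?thesis using iP Suc_i j(1) sameblock_Suc_iff[of R j] by (simp add: parw_iff)
  qed
  then have "sameblock Pw' ?x ?y" using sameblock_iff_le[of ?x ?y Pw] xy(3) assms(2) by auto
  then show ?thesis using sameblock_parwD[of n P Q w' ?x ?y] by simp
qed

lemma Pw_eq_Pw'_iff:
  "Pw = Pw' \<longleftrightarrow> (\<forall>a<n. \<forall>b<n. sameblock Rw a b \<longrightarrow> sameblock Q (u a) (u b))"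
proof
  assume eq: "Pw = Pw'"
  have "sameblock Q (u a) (u b)" if "sameblock Rw a b" "a \<le> b" for a b
    using that Rw_step_sameblock_Q[OF _ eq] sameblock_chain[of a b Q u]
    by (auto simp: sameblock_iff_le)
  then show "\<forall>a<n. \<forall>b<n. sameblock Rw a b \<longrightarrow> sameblock Q (u a) (u b)"
    by (metis nat_le_linear sameblock_sym)
next
  assume Rw_Q: "\<forall>a<n. \<forall>b<n. sameblock Rw a b \<longrightarrow> sameblock Q (u a) (u b)"
  have "Pw \<subseteq> Pw'"
  proof
    fix i assume "i \<in> Pw"
    then have i: "i \<in> P" "Suc i < n" "sameblock Pw i (Suc i)"
      by (auto simp: parw_iff sameblock_Suc_iff)
    then have "sameblock Q (u (w i)) (u (w (Suc i)))"
      using sameblock_Pw_imp_Rw[of i "Suc i"] Rw_Q w_less by simp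
    then show "i \<in> Pw'" using i by (simp add: parw_iff)
  qed
  then show "Pw = Pw'" using Pw'_subset_Pw by blast
qed

lemma in_WRSQ_iff: "(\<exists>u'\<in>WRSQ n R Rw Q. w' = u' \<circ> w) \<longleftrightarrow> Pw = Pw'"
proof -
  have "w' = u' \<circ> w \<longleftrightarrow> u = u'" for u'
    by (metis comp_apply ext w_inv_w)
  then show ?thesis
    using u_in unfolding Pw_eq_Pw'_iff WRSQ_def by auto
qed

text \<open>The positive roots \<open>e\<^sub>a - e\<^sub>b\<close> of \<open>M\<^bsub>P\<^sub>w\<^esub>\<close> outside \<open>M\<^bsub>P\<^sub>w\<^sub>'\<^esub>\<close>; they index
\<open>2\<rho>\<^bsub>P\<^sub>w\<^sub>'\<^esub>\<^bsup>P\<^sub>w\<^esup>\<close>.\<close>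
abbreviation "Roots \<equiv> {(a,b). a < b \<and> b < n \<and> sameblock Pw a b \<and> \<not> sameblock Pw' a b}"

lemma finite_Roots: "finite Roots"
  by (rule finite_subset[of _ "{..<n} \<times> {..<n}"]) auto

lemma Roots_empty_iff: "Roots = {} \<longleftrightarrow> Pw = Pw'"
proof
  assume empty: "Roots = {}"
  have "i \<in> Pw'" if "i \<in> Pw" for i
  proof -
    have "(i, Suc i) \<notin> Roots" using empty by blast
    moreover have "Suc i < n" using that by (simp add: parw_iff)
    ultimately show ?thesis using that sameblock_Suc_iff[of Pw i] sameblock_Suc_iff[of Pw' i] by auto
  qed
  then show "Pw = Pw'" using Pw'_subset_Pw by blast
qed simp

end

locale nu_setting = relative_position +
  fixes r :: "nat \<Rightarrow> nat"
  assumes r_pos: "k < n \<Longrightarrow> 0 < r k"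
    and r_le: "k < n \<Longrightarrow> r k \<le> n"
    and r_const_on_P_blocks: "a < n \<Longrightarrow> b < n \<Longrightarrow> sameblock P a b \<Longrightarrow> r a = r b"
begin

abbreviation "X \<equiv> act w' (nu n r Pw' Pw)"

lemma ip_X: "ip n X z = -(1/2) * (\<Sum>(a,b)\<in>Roots. (z (w' a) - z (w' b)) / real (r a))"
proof -
  let ?h = "\<lambda>k. z (w' k) / real (r k)"
  have "ip n X z = - (\<Sum>k<n. rho n Pw' Pw k * ?h k)"
    unfolding ip_act[OF w'_permutes] nu_def by (simp add: sum_negf)
  also have "\<dots> = -(1/2) * (\<Sum>(a,b)\<in>Roots. ?h a - ?h b)"
    by (simp only: sum_rho_mult)
  also have "(\<Sum>(a,b)\<in>Roots. ?h a - ?h b) = (\<Sum>(a,b)\<in>Roots. (z (w' a) - z (w' b)) / real (r a))"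
  proof (intro sum.cong refl, clarify)
    fix a b assume "a < b" "b < n" "sameblock Pw a b"
    then have "r b = r a" using r_const_on_P_blocks[of a b] sameblock_parwD[of n P R w a b] by simp
    then show "?h a - ?h b = (z (w' a) - z (w' b)) / real (r a)" by (simp add: diff_divide_distrib)
  qed
  finally show ?thesis .
qed

lemma r_pos_Roots: "(a,b) \<in> Roots \<Longrightarrow> 0 < r a"
  using r_pos by simp

lemma coweight_term_nonneg:
  assumes "v \<in> coweights n Q R" "(a,b) \<in> Roots"
  shows "0 \<le> (v (w' a) - v (w' b)) / real (r a)"
proof -
  have "v (w' b) \<le> v (w' a)"
    using assms(2) w'_less_sameblock_R[of a b] w'_less
      coweight_antimono_on_block[OF assms(1), of "w' a" "w' b"] by auto
  then show ?thesis by simp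
qed

lemma ip_X_coweight_eq_0_iff:
  assumes v: "v \<in> coweights n Q R"
  shows "ip n X v = 0 \<longleftrightarrow> (\<forall>a<n. \<forall>b<n. sameblock Pw a b \<longrightarrow> v (w' a) = v (w' b))"
proof -
  have "ip n X v = 0 \<longleftrightarrow> (\<Sum>(a,b)\<in>Roots. (v (w' a) - v (w' b)) / real (r a)) = 0"
    unfolding ip_X by simp
  also have "\<dots> \<longleftrightarrow> (\<forall>p\<in>Roots. (\<lambda>(a,b). (v (w' a) - v (w' b)) / real (r a)) p = 0)"
    using coweight_term_nonneg[OF v]
    by (intro sum_nonneg_eq_0_iff[OF finite_Roots]) (auto split: prod.splits)
  also have "\<dots> \<longleftrightarrow> (\<forall>(a,b)\<in>Roots. v (w' a) = v (w' b))"
  proof (intro ball_cong refl)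
    fix p assume p: "p \<in> Roots"
    obtain a b where p_eq: "p = (a,b)" by (cases p)
    show "(\<lambda>(a,b). (v (w' a) - v (w' b)) / real (r a)) p = 0 \<longleftrightarrow> (\<lambda>(a,b). v (w' a) = v (w' b)) p"
      using r_pos_Roots[of a b] p unfolding p_eq by simp
  qed
  also have "\<dots> \<longleftrightarrow> (\<forall>a<n. \<forall>b<n. sameblock Pw a b \<longrightarrow> v (w' a) = v (w' b))"
  proof
    assume on_Roots: "\<forall>(a,b)\<in>Roots. v (w' a) = v (w' b)"
    have v_Q: "\<forall>a<n. \<forall>b<n. sameblock Q a b \<longrightarrow> v a = v b"
      using v unfolding coweights_def aQR_def by blast
    have "v (w' a) = v (w' b)" if ab: "a < b" "b < n" "sameblock Pw a b" for a b
    proof (cases "sameblock Pw' a b")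
      case True
      then have "sameblock Q (w' a) (w' b)" using sameblock_parwD by blast
      moreover have "w' a < n" "w' b < n" using w'_less ab by auto
      ultimately show ?thesis using v_Q by blast
    next
      case False
      then have "(a,b) \<in> Roots" using ab by simp
      then show ?thesis using on_Roots by blast
    qed
    then show "\<forall>a<n. \<forall>b<n. sameblock Pw a b \<longrightarrow> v (w' a) = v (w' b)"
      by (metis linorder_neqE_nat sameblock_sym)
  qed auto
  finally show ?thesis .
qed

lemma coweight_pairing:
  assumes v: "v \<in> coweights n Q R"
  shows "ip n X v \<le> 0 \<and> (ip n X v = 0 \<longleftrightarrow> v \<in> act w' ` aQR n Pw (Gpar n))"
proof
  show "ip n X v \<le> 0"
    unfolding ip_X using coweight_term_nonneg[OF v] by (auto intro!: sum_nonneg)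
  have v_aQR: "v \<in> aQR n Q R" using v unfolding coweights_def by blast
  then have "v \<in> Vec n" unfolding aQR_def by blast
  then show "ip n X v = 0 \<longleftrightarrow> v \<in> act w' ` aQR n Pw (Gpar n)"
    unfolding ip_X_coweight_eq_0_iff[OF v]
    using in_act_image_aQR_Gpar_iff[OF w'_permutes _ sum_aQR_eq_0[OF v_aQR]] by blast
qed

lemma ip_X_proj_le:
  assumes gap: "\<And>x y. x < y \<Longrightarrow> y < n \<Longrightarrow> d \<le> T x - T y"
  shows "ip n X (proj n Q R T) \<le> -(1/2) * (d * (\<Sum>(a,b)\<in>Roots. 1 / real (r a)))"
proof -
  let ?p = "proj n Q R T"
  have "d / real (r a) \<le> (?p (w' a) - ?p (w' b)) / real (r a)" if "(a,b) \<in> Roots" for a b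
  proof -
    from that have ab: "a < b" "b < n" "sameblock Pw a b" "\<not> sameblock Pw' a b" by auto
    let ?A = "blockof n Q (w' a)" and ?B = "blockof n Q (w' b)"
    have lt: "w' a < w' b" "w' a < n" "w' b < n" and sR: "sameblock R (w' a) (w' b)"
      using w'_less_sameblock_R[OF ab(3,1,2)] w'_less ab by auto
    have "d \<le> (\<Sum>x\<in>?A. T x) / real (card ?A) - (\<Sum>y\<in>?B. T y) / real (card ?B)"
    proof (rule avg_diff_lower_bound)
      show "?A \<noteq> {}" "?B \<noteq> {}" using self_in_blockof lt by blast+
      show "\<forall>x\<in>?A. \<forall>y\<in>?B. d \<le> T x - T y"
        using sameblock_separated[of Q "w' a" _ "w' b"] not_sameblock_Q_w'[OF ab] lt gap
        by (auto simp: blockof_def)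
    qed simp_all
    also have "\<dots> = ?p (w' a) - ?p (w' b)"
      using lt blockof_eq[OF sR, of n]
      by (simp add: proj_eq_block_avg_diff[OF Q_subset] block_avg_def)
    finally show ?thesis using r_pos ab by (simp add: divide_right_mono)
  qed
  then have "d * (\<Sum>(a,b)\<in>Roots. 1 / real (r a))
      \<le> (\<Sum>(a,b)\<in>Roots. (?p (w' a) - ?p (w' b)) / real (r a))"
    unfolding sum_distrib_left by (intro sum_mono) auto
  then show ?thesis unfolding ip_X by simp
qed

lemma sum_inv_r_Roots_ge:
  assumes "(a,b) \<in> Roots"
  shows "1 / real n \<le> (\<Sum>(a,b)\<in>Roots. 1 / real (r a))"
proof -
  have "1 / real n \<le> 1 / real (r a)"
    using assms r_pos r_le by (simp add: frac_le)
  also have "\<dots> = (\<lambda>(a,b). 1 / real (r a)) (a,b)" by simp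
  also have "\<dots> \<le> (\<Sum>(a,b)\<in>Roots. 1 / real (r a))"
    by (rule member_le_sum[OF assms _ finite_Roots]) (auto split: prod.splits)
  finally show ?thesis .
qed

lemma proj_X_eq_0_iff: "proj n Q R X = (\<lambda>k. 0) \<longleftrightarrow> Pw = Pw'"
proof
  assume "Pw = Pw'"
  then have "X = (\<lambda>k. 0)" unfolding nu_def rho_def act_def by simp
  then show "proj n Q R X = (\<lambda>k. 0)" using proj_zero[OF Q_subset] by simp
next
  assume proj_0: "proj n Q R X = (\<lambda>k. 0)"
  show "Pw = Pw'"
  proof (rule ccontr)
    assume "Pw \<noteq> Pw'"
    then obtain a b where ab: "(a,b) \<in> Roots" using Roots_empty_iff by auto
    let ?T = "\<lambda>k. - real k"
    have "ip n X (proj n Q R ?T) = 0"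
      using proj_0 ip_proj_sym[OF Q_subset, of n X ?T] by (simp add: ip_def)
    moreover have "ip n X (proj n Q R ?T) \<le> -(1/2) * (1 * (\<Sum>(a,b)\<in>Roots. 1 / real (r a)))"
      by (rule ip_X_proj_le) auto
    moreover have "0 < 1 / real n" using ab by simp
    ultimately show False using sum_inv_r_Roots_ge[OF ab] by linarith
  qed
qed

lemma ip_proj_X_le:
  assumes dominant: "\<forall>i<n-1. 0 \<le> sroot i T" and "Pw \<noteq> Pw'"
  shows "ip n (proj n Q R X) T \<le> - (1 / (2 * real n)) * dT n T"
proof -
  obtain a b where ab: "(a,b) \<in> Roots" using assms(2) Roots_empty_iff by auto
  have gap: "dT n T \<le> T x - T y" if "x < y" "y < n" for x y
  proof -
    have "dT n T \<le> sroot x T" unfolding dT_def using that by (intro Min_le) auto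
    moreover have "T y \<le> T (Suc x)"
      using antimono_if_sroot_nonneg[of "Suc x" y T] dominant that by auto
    ultimately show ?thesis unfolding sroot_def by simp
  qed
  have "a < n - 1" using ab by auto
  then have d_nonneg: "0 \<le> dT n T"
    unfolding dT_def using dominant by (subst Min_ge_iff) auto
  have "ip n (proj n Q R X) T = ip n X (proj n Q R T)"
    by (rule ip_proj_sym[OF Q_subset])
  also have "\<dots> \<le> -(1/2) * (dT n T * (\<Sum>(a,b)\<in>Roots. 1 / real (r a)))"
    by (rule ip_X_proj_le[OF gap])
  also have "\<dots> \<le> -(1/2) * (dT n T * (1 / real n))"
    using mult_left_mono[OF sum_inv_r_Roots_ge[OF ab] d_nonneg] by simp
  finally show ?thesis by simp
qed

end

lemma nu_setting_if_pi_data: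
  assumes "pi_data n P r Ppi" "w \<in> WQS n R P" "Q \<subseteq> R" "u \<in> WQSR n R Q (parw n R P (inv w))"
  shows "nu_setting n P R Q w u r"
proof -
  have r: "\<forall>k<n. 0 < r k" "\<forall>a<n. \<forall>b<n. sameblock P a b \<longrightarrow> r a = r b"
    "\<forall>k<n. card (blockof n Ppi k) = r k"
    using assms(1) unfolding pi_data_def by blast+
  have "r k \<le> n" if "k < n" for k
  proof -
    have "card (blockof n Ppi k) \<le> card {..<n}"
      by (rule card_mono) (auto simp: blockof_def)
    then show ?thesis using r(3) that by simp
  qed
  then show ?thesis
    using assms(2-4) r(1,2) by unfold_locales blast+
qed

theorem mainTheorem11:
  fixes n :: nat and P R Ppi :: "nat set" and r :: "nat \<Rightarrow> nat" and w :: "nat \<Rightarrow> nat"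
  assumes "1 \<le> n"
    and "stdpar n P" and "stdpar n R"
    and "pi_data n P r Ppi"
    and "w \<in> WQS n R P"
  shows
    "(\<forall>Q u. Q \<subseteq> R \<longrightarrow> u \<in> WQSR n R Q (parw n R P (inv w)) \<longrightarrow>
        Ppi \<subseteq> parw n P Q (u \<circ> w) \<longrightarrow>
        (\<forall>v \<in> coweights n Q R.
           ip n (act (u \<circ> w) (nu n r (parw n P Q (u \<circ> w)) (parw n P R w))) v \<le> 0 \<and>
           (ip n (act (u \<circ> w) (nu n r (parw n P Q (u \<circ> w)) (parw n P R w))) v = 0 \<longleftrightarrow>
              v \<in> act (u \<circ> w) ` aQR n (parw n P R w) (Gpar n))))
   \<and> (\<forall>Q u. Q \<subseteq> R \<longrightarrow> u \<in> WQSR n R Q (parw n R P (inv w)) \<longrightarrow>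
        Ppi \<subseteq> parw n P Q (u \<circ> w) \<longrightarrow>
        ((parw n P R w = parw n P Q (u \<circ> w) \<longleftrightarrow>
            proj n Q R (act (u \<circ> w) (nu n r (parw n P Q (u \<circ> w)) (parw n P R w))) = (\<lambda>k. 0))
         \<and> (proj n Q R (act (u \<circ> w) (nu n r (parw n P Q (u \<circ> w)) (parw n P R w))) = (\<lambda>k. 0)
            \<longleftrightarrow> (\<exists>u' \<in> WRSQ n R (parw n R P (inv w)) Q. u \<circ> w = u' \<circ> w))))
   \<and> (\<exists>c1 > 0. \<forall>T Q u. T \<in> Vec n \<longrightarrow> (\<forall>i<n-1. 0 \<le> sroot i T) \<longrightarrow> Q \<subseteq> R \<longrightarrow>
        u \<in> WQSR n R Q (parw n R P (inv w)) \<longrightarrow>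
        \<not> (\<exists>u' \<in> WRSQ n R (parw n R P (inv w)) Q. u \<circ> w = u' \<circ> w) \<longrightarrow>
        Ppi \<subseteq> parw n P Q (u \<circ> w) \<longrightarrow>
        ip n (proj n Q R (act (u \<circ> w) (nu n r (parw n P Q (u \<circ> w)) (parw n P R w)))) T
          \<le> - c1 * dT n T)"
proof -
  have setting: "nu_setting n P R Q w u r"
    if "Q \<subseteq> R" "u \<in> WQSR n R Q (parw n R P (inv w))" for Q u
    using assms(4,5) that by (rule nu_setting_if_pi_data)
  have position: "relative_position n P R Q w u"
    if "Q \<subseteq> R" "u \<in> WQSR n R Q (parw n R P (inv w))" for Q u
    using assms(5) that by unfold_locales
  have "1 / (2 * real n) > 0" using assms(1) by simp
  then show ?thesis
    by (intro conjI exI[of _ "1 / (2 * real n)"] allI impI ballI)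
       (simp_all add: nu_setting.coweight_pairing[OF setting] nu_setting.proj_X_eq_0_iff[OF setting]
         nu_setting.ip_proj_X_le[OF setting, simplified] relative_position.in_WRSQ_iff[OF position])
qed

end
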